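(* Let $A,B\in\mathbb{T}^{m\times n}$ have integer finite entries, with every column of $A$ and every row of $B$ containing a finite entry, and let $F=A^\sharp\circ B$. Suppose there exists $v\in\mathbb{R}^n$ with $F(v)=\rho(F)+v$ and $\rho(F)\ne0$. Consider value iteration: $u^0=0$, $u^{\ell+1}=F(u^\ell)$, continued while $\max_iu^\ell_i\ge0$ and $\min_iu^\ell_i\le0$, with $N$ the first index where this fails. Then $N\le 2n^2W$.
   Context: $\mathbb{T}=\mathbb{R}\cup\{-\infty\}$. $(B\odot x)_i=\max_j(B_{ij}+x_j)$; $A^\sharp(y)_j=\min_i(-A_{ij}+y_i)$ with $(+\infty)+(-\infty)=+\infty$. The scalar $\rho(F)$ with $F(v)=\rho(F)+v$ for some $v\in\mathbb{R}^n$ is unique (ergodic constant). $W=\max\{|A_{ij}-B_{ih}|: A_{ij}\ne-\infty,\ B_{ih}\ne-\infty\}$. *)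

theory Defs
  imports Complex_Main "HOL-Library.Extended_Real"
begin

text \<open>Tropical numbers T = R \<union> {-\<infinity>} are modelled inside ereal (only -\<infinity> and finite
values occur as matrix entries). Matrices are functions nat \<Rightarrow> nat \<Rightarrow> ereal with
row indices i < m and column indices j < n; vectors are functions nat \<Rightarrow> ereal
with indices < n (resp. < m). The ereal addition satisfies \<infinity> + (-\<infinity>) = \<infinity>,
which is exactly the convention of the paper.\<close>

definition tmult :: "nat \<Rightarrow> (nat \<Rightarrow> nat \<Rightarrow> ereal) \<Rightarrow> (nat \<Rightarrow> ereal) \<Rightarrow> nat \<Rightarrow> ereal" where
  "tmult n B x i = Max {B i j + x j | j. j < n}"

definition tres :: "nat \<Rightarrow> (nat \<Rightarrow> nat \<Rightarrow> ereal) \<Rightarrow> (nat \<Rightarrow> ereal) \<Rightarrow> nat \<Rightarrow> ereal" where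
  "tres m A y j = Min {- A i j + y i | i. i < m}"

definition shapley :: "nat \<Rightarrow> nat \<Rightarrow> (nat \<Rightarrow> nat \<Rightarrow> ereal) \<Rightarrow> (nat \<Rightarrow> nat \<Rightarrow> ereal)
    \<Rightarrow> (nat \<Rightarrow> ereal) \<Rightarrow> nat \<Rightarrow> ereal" where
  "shapley m n A B x = tres m A (tmult n B x)"

definition Wconst :: "nat \<Rightarrow> nat \<Rightarrow> (nat \<Rightarrow> nat \<Rightarrow> ereal) \<Rightarrow> (nat \<Rightarrow> nat \<Rightarrow> ereal) \<Rightarrow> real" where
  "Wconst m n A B = Max {\<bar>real_of_ereal (A i j) - real_of_ereal (B i h)\<bar> | i j h.
      i < m \<and> j < n \<and> h < n \<and> A i j \<noteq> -\<infinity> \<and> B i h \<noteq> -\<infinity>}"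

definition viter :: "nat \<Rightarrow> nat \<Rightarrow> (nat \<Rightarrow> nat \<Rightarrow> ereal) \<Rightarrow> (nat \<Rightarrow> nat \<Rightarrow> ereal)
    \<Rightarrow> nat \<Rightarrow> nat \<Rightarrow> ereal" where
  "viter m n A B l = (shapley m n A B ^^ l) (\<lambda>_. 0)"

definition continues :: "nat \<Rightarrow> (nat \<Rightarrow> ereal) \<Rightarrow> bool" where
  "continues n u \<longleftrightarrow> Max {u i | i. i < n} \<ge> 0 \<and> Min {u i | i. i < n} \<le> 0"

end

theory Submission imports Defs begin

text \<open>Say F(v) = r + v with r > 0; the case r < 0 is the mirror image. In step l + 1 take the
  row i optimal for the minimiser against u^l and, in that row, the column optimal for the
  maximiser against v. This yields u^l_j >= sum_t w_t along a walk j = s_0, ..., s_l of columns,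
  where each weight w_t = B_{i,s_{t+1}} - A_{i,s_t} is an integer with |w_t| <= W and
  w_t >= r + v_{s_t} - v_{s_{t+1}}. The potential v telescopes along cycles, so every cycle has
  positive integer, hence at least 1, weight; in particular n W >= 1. Cutting out cycles of
  length at most n gives sum_t w_t >= (l - n + 1)/n - (n - 1) W, which is positive for
  l = floor (2 n^2 W). Then all entries of u^l are positive and the iteration has stopped.\<close>

definition drift_walk :: "nat \<Rightarrow> real \<Rightarrow> real \<Rightarrow> (nat \<Rightarrow> real) \<Rightarrow> nat \<Rightarrow> (nat \<Rightarrow> nat) \<Rightarrow> (nat \<Rightarrow> real) \<Rightarrow> bool" where
  "drift_walk n W r \<phi> l s w \<longleftrightarrow> (\<forall>t\<le>l. s t < n) \<and>
     (\<forall>t<l. w t \<in> \<int> \<and> \<bar>w t\<bar> \<le> W \<and> r + \<phi> (s t) - \<phi> (s (Suc t)) \<le> w t)"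

lemma pigeonhole_repeat:
  fixes s :: "nat \<Rightarrow> nat"
  assumes "\<forall>t\<le>n. s t < n"
  shows "\<exists>p q. p < q \<and> q \<le> n \<and> s p = s q"
proof -
  have "card (s ` {..n}) \<le> card {..<n}"
    using assms by (intro card_mono) auto
  hence "\<not> inj_on s {..n}" by (intro pigeonhole) simp
  then obtain x y where "x \<le> n" "y \<le> n" "x \<noteq> y" "s x = s y" unfolding inj_on_def by auto
  thus ?thesis by (metis linorder_neqE_nat)
qed

text \<open>Along a cycle the potential differences telescope away, so its weight is an integer
  of size at least (q - p) r > 0.\<close>
lemma drift_walk_cycle_weight:
  assumes "drift_walk n W r \<phi> l s w" "0 < r" "p < q" "q \<le> l" "s p = s q"
  shows "1 \<le> (\<Sum>t\<in>{p..<q}. w t)"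
proof -
  have "real (q - p) * r = (\<Sum>t\<in>{p..<q}. r + \<phi> (s t) - \<phi> (s (Suc t)))"
    using sum_Suc_diff'[of p q "\<lambda>t. \<phi> (s t)"] assms(3,5) by (simp add: sum.distrib sum_subtractf)
  also have "\<dots> \<le> (\<Sum>t\<in>{p..<q}. w t)"
    using assms(1,4) unfolding drift_walk_def by (intro sum_mono) auto
  finally have "0 < (\<Sum>t\<in>{p..<q}. w t)"
    using assms(2,3) by (smt (verit) of_nat_0_less_iff zero_less_diff mult_pos_pos)
  moreover have "(\<Sum>t\<in>{p..<q}. w t) \<in> \<int>"
    using assms(1,4) unfolding drift_walk_def by (intro Ints_sum) auto
  ultimately show ?thesis using Ints_nonzero_abs_ge1 by fastforce
qed

lemma drift_walk_cut_cycle: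
  assumes "drift_walk n W r \<phi> l s w" "p < q" "q \<le> l" "s p = s q"
  defines "d \<equiv> q - p"
  shows "drift_walk n W r \<phi> (l - d) (\<lambda>t. if t < p then s t else s (t + d))
           (\<lambda>t. if t < p then w t else w (t + d))"
    and "(\<Sum>t<l - d. if t < p then w t else w (t + d)) = (\<Sum>t<l. w t) - (\<Sum>t\<in>{p..<q}. w t)"
proof -
  let ?s = "\<lambda>t. if t < p then s t else s (t + d)"
  have "?s (Suc t) = s (Suc t)" if "t < p" for t
  proof (cases "Suc t < p")
    case False
    then have "Suc t = p" "Suc t + d = q" using that assms(2) unfolding d_def by auto
    then show ?thesis using assms(4) by simp
  qed simp
  moreover have "?s (Suc t) = s (Suc t + d)" if "\<not> t < p" for t
    using that by simp
  moreover have "d \<le> l" using assms(2,3) unfolding d_def by simp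
  ultimately show "drift_walk n W r \<phi> (l - d) ?s (\<lambda>t. if t < p then w t else w (t + d))"
    using assms(1) unfolding drift_walk_def by (auto simp: not_less)
  let ?w = "\<lambda>t. if t < p then w t else w (t + d)"
  have "(\<Sum>t<l. w t) = (\<Sum>t\<in>{0..<p}. w t) + (\<Sum>t\<in>{p..<q}. w t) + (\<Sum>t\<in>{q..<l}. w t)"
    using assms(2,3) by (simp add: atLeast0LessThan[symmetric] sum.atLeastLessThan_concat)
  moreover have "(\<Sum>t<l - d. ?w t) = (\<Sum>t\<in>{0..<p}. ?w t) + (\<Sum>t\<in>{p..<l - d}. ?w t)"
    using assms(2,3) unfolding lessThan_atLeast0 d_def by (intro sum.atLeastLessThan_concat[symmetric]) auto
  moreover have "(\<Sum>t\<in>{0..<p}. ?w t) = (\<Sum>t\<in>{0..<p}. w t)" by simp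
  moreover have "(\<Sum>t\<in>{p..<l - d}. ?w t) = (\<Sum>t\<in>{p+d..<l - d + d}. w t)"
    by (simp add: sum.shift_bounds_nat_ivl)
  moreover have "{p+d..<l - d + d} = {q..<l}" using assms(2,3) unfolding d_def by auto
  ultimately show "(\<Sum>t<l - d. ?w t) = (\<Sum>t<l. w t) - (\<Sum>t\<in>{p..<q}. w t)"
    by simp
qed

text \<open>By pigeonhole, cut out cycles (length at most n, weight at least 1) until fewer than
  n steps remain.\<close>
lemma drift_walk_weight_lower_bound:
  assumes "drift_walk n W r \<phi> l s w" "0 < n" "0 < r" "0 \<le> W"
  shows "(real l - real n + 1) / real n - (real n - 1) * W \<le> (\<Sum>t<l. w t)"
  using assms(1)
proof (induction l arbitrary: s w rule: less_induct)
  case (less l)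
  show ?case
  proof (cases "l < n")
    case True
    have "- (real l * W) \<le> (\<Sum>t<l. w t)"
      using sum_mono[of "{..<l}" "\<lambda>_. - W" w] less.prems unfolding drift_walk_def by fastforce
    moreover have "real l * W \<le> (real n - 1) * W" using True assms(4) by (intro mult_right_mono) auto
    moreover have "(real l - real n + 1) / real n \<le> 0" using True by (intro divide_nonpos_pos) auto
    ultimately show ?thesis by linarith
  next
    case False
    then obtain p q where pq: "p < q" "q \<le> n" "s p = s q"
      using pigeonhole_repeat[of n s] less.prems unfolding drift_walk_def by auto
    define d where "d = q - p"
    have d: "0 < d" "d \<le> n" "q \<le> l" "d \<le> l" using pq False unfolding d_def by auto
    note cut = drift_walk_cut_cycle[OF less.prems pq(1) d(3) pq(3), folded d_def]
    have "(real (l - d) - real n + 1) / real n - (real n - 1) * W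
        \<le> (\<Sum>t<l - d. if t < p then w t else w (t + d))"
      by (rule less.IH[OF _ cut(1)]) (use d in auto)
    moreover have "1 \<le> (\<Sum>t\<in>{p..<q}. w t)"
      using drift_walk_cycle_weight[OF less.prems assms(3) pq(1) d(3) pq(3)] .
    moreover have "(real (l - d) - real n + 1) / real n = (real l - real n + 1) / real n - real d / real n"
      using d by (simp add: of_nat_diff field_simps)
    moreover have "real d / real n \<le> 1" using d by simp
    ultimately show ?thesis using cut(2) by linarith
  qed
qed

lemma drift_walk_one_le_n_mult_W:
  assumes "drift_walk n W r \<phi> n s w" "0 < r"
  shows "1 \<le> real n * W"
proof -
  obtain p q where pq: "p < q" "q \<le> n" "s p = s q"
    using pigeonhole_repeat[of n s] assms(1) unfolding drift_walk_def by auto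
  have "1 \<le> (\<Sum>t\<in>{p..<q}. w t)" using drift_walk_cycle_weight[OF assms pq(1,2,3)] .
  also have "\<dots> \<le> (\<Sum>t\<in>{p..<q}. W)"
  proof (rule sum_mono)
    fix t assume "t \<in> {p..<q}"
    then have "\<bar>w t\<bar> \<le> W" using assms(1) pq(2) unfolding drift_walk_def by simp
    then show "w t \<le> W" by linarith
  qed
  also have "\<dots> = real (q - p) * W" by simp
  also have "\<dots> \<le> real n * W"
  proof (rule mult_right_mono)
    have "\<bar>w 0\<bar> \<le> W" using assms(1) pq unfolding drift_walk_def by simp
    then show "0 \<le> W" by linarith
  qed (use pq in simp)
  finally show ?thesis .
qed

lemma drift_walk_below:
  fixes u :: "nat \<Rightarrow> nat \<Rightarrow> real"
  assumes "\<forall>j<n. u 0 j = 0"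
    and step: "\<And>l j. j < n \<Longrightarrow>
      \<exists>k<n. \<exists>c\<in>\<int>. \<bar>c\<bar> \<le> W \<and> r + \<phi> j - \<phi> k \<le> c \<and> c + u l k \<le> u (Suc l) j"
    and "j < n"
  shows "\<exists>s w. s 0 = j \<and> drift_walk n W r \<phi> l s w \<and> (\<Sum>t<l. w t) \<le> u l j"
  using assms(3)
proof (induction l arbitrary: j)
  case 0
  then show ?case using assms(1) by (intro exI[of _ "\<lambda>_. j"]) (auto simp: drift_walk_def)
next
  case (Suc l)
  obtain k c where k: "k < n" "c \<in> \<int>" "\<bar>c\<bar> \<le> W" "r + \<phi> j - \<phi> k \<le> c" "c + u l k \<le> u (Suc l) j"
    using step[OF Suc.prems] by blast
  obtain s w where sw: "s 0 = k" "drift_walk n W r \<phi> l s w" "(\<Sum>t<l. w t) \<le> u l k"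
    using Suc.IH[OF k(1)] by blast
  let ?s = "\<lambda>t. if t = 0 then j else s (t - 1)"
  let ?w = "\<lambda>t. if t = 0 then c else w (t - 1)"
  have "drift_walk n W r \<phi> (Suc l) ?s ?w"
    using sw(1,2) k Suc.prems unfolding drift_walk_def
    by (auto simp: less_Suc_eq_0_disj Suc_le_mono)
  moreover have "(\<Sum>t<Suc l. ?w t) = c + (\<Sum>t<l. w t)"
    unfolding sum.lessThan_Suc_shift by simp
  ultimately show ?case using sw(3) k(5) by (intro exI[of _ ?s] exI[of _ ?w]) auto
qed

lemma drift_forces_positive:
  fixes u :: "nat \<Rightarrow> nat \<Rightarrow> real"
  assumes "0 < n" "0 < r" "\<forall>j<n. u 0 j = 0"
    and step: "\<And>l j. j < n \<Longrightarrow>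
      \<exists>k<n. \<exists>c\<in>\<int>. \<bar>c\<bar> \<le> W \<and> r + \<phi> j - \<phi> k \<le> c \<and> c + u l k \<le> u (Suc l) j"
  shows "\<exists>L. real L \<le> 2 * real n ^ 2 * W \<and> (\<forall>j<n. 0 < u L j)"
proof -
  have walk: "\<exists>s w. drift_walk n W r \<phi> l s w \<and> (\<Sum>t<l. w t) \<le> u l j" if "j < n" for l j
    using drift_walk_below[of n u W r \<phi>] assms(3) step that by blast
  obtain s w where "drift_walk n W r \<phi> n s w" using walk[of 0 n] assms(1) by blast
  then have nW: "1 \<le> real n * W" using drift_walk_one_le_n_mult_W assms(2) by blast
  then have "0 < real n * W" by linarith
  then have W: "0 \<le> W" using assms(1) by (simp add: zero_less_mult_iff)
  define L where "L = nat \<lfloor>2 * real n ^ 2 * W\<rfloor>"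
  have L: "real L \<le> 2 * real n ^ 2 * W" "2 * real n ^ 2 * W - 1 < real L"
    unfolding L_def using W by (auto simp: of_nat_nat)
  have "real n * 1 \<le> real n * (real n * W)" using nW by (intro mult_left_mono) auto
  moreover have "0 \<le> real n * W" using W by simp
  ultimately have "real n * ((real n - 1) * W) < real L - real n + 1"
    using L(2) by (simp add: algebra_simps power2_eq_square)
  then have margin: "(real n - 1) * W < (real L - real n + 1) / real n"
    using assms(1) by (simp add: field_simps)
  have "0 < u L j" if j: "j < n" for j
  proof -
    obtain s w where "drift_walk n W r \<phi> L s w" "(\<Sum>t<L. w t) \<le> u L j"
      using walk[OF j] by blast
    then show ?thesis
      using drift_walk_weight_lower_bound[of n W r \<phi> L s w] assms(1,2) W margin by linarith
  qed
  with L(1) show ?thesis by blast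
qed

lemma not_continues_if_one_sign:
  assumes "0 < n" "(\<forall>j<n. 0 < u j) \<or> (\<forall>j<n. u j < 0)"
  shows "\<not> continues n u"
proof -
  have set: "{u i | i. i < n} = u ` {..<n}" and ne: "u ` {..<n} \<noteq> {}" using assms(1) by auto
  obtain i where "i < n" "Min (u ` {..<n}) = u i" using Min_in[OF _ ne] by auto
  moreover obtain i' where "i' < n" "Max (u ` {..<n}) = u i'" using Max_in[OF _ ne] by auto
  ultimately show ?thesis using assms(2) unfolding continues_def set by (metis not_le)
qed

lemma Wconst_ge:
  assumes "i < m" "j < n" "h < n" "A i j \<noteq> -\<infinity>" "B i h \<noteq> -\<infinity>"
  shows "\<bar>real_of_ereal (A i j) - real_of_ereal (B i h)\<bar> \<le> Wconst m n A B"
proof -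
  have "{\<bar>real_of_ereal (A i j) - real_of_ereal (B i h)\<bar> | i j h.
      i < m \<and> j < n \<and> h < n \<and> A i j \<noteq> -\<infinity> \<and> B i h \<noteq> -\<infinity>}
    \<subseteq> (\<lambda>(i, j, h). \<bar>real_of_ereal (A i j) - real_of_ereal (B i h)\<bar>) ` ({..<m} \<times> {..<n} \<times> {..<n})"
    by (auto intro!: image_eqI[where x = "(_, _, _)"])
  then have "finite {\<bar>real_of_ereal (A i j) - real_of_ereal (B i h)\<bar> | i j h.
      i < m \<and> j < n \<and> h < n \<and> A i j \<noteq> -\<infinity> \<and> B i h \<noteq> -\<infinity>}"
    by (rule finite_subset) simp
  then show ?thesis unfolding Wconst_def by (rule Max_ge) (use assms in blast)
qed

lemma shapley_cong:
  assumes "\<And>h. h < n \<Longrightarrow> x h = y h"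
  shows "shapley m n A B x = shapley m n A B y"
proof -
  have "{B i j + x j | j. j < n} = {B i j + y j | j. j < n}" for i
    using assms by force
  then have "tmult n B x = tmult n B y" unfolding tmult_def by simp
  then show ?thesis unfolding shapley_def by simp
qed

locale integer_shapley =
  fixes m n :: nat and A B :: "nat \<Rightarrow> nat \<Rightarrow> ereal"
  assumes m_pos: "0 < m" and n_pos: "0 < n"
    and A_int: "\<forall>i<m. \<forall>j<n. A i j = -\<infinity> \<or> (\<exists>k::int. A i j = ereal (of_int k))"
    and B_int: "\<forall>i<m. \<forall>j<n. B i j = -\<infinity> \<or> (\<exists>k::int. B i j = ereal (of_int k))"
    and A_col: "\<forall>j<n. \<exists>i<m. A i j \<noteq> -\<infinity>"
    and B_row: "\<forall>i<m. \<exists>j<n. B i j \<noteq> -\<infinity>"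
begin

lemma A_finite_int:
  assumes "i < m" "j < n" "A i j \<noteq> -\<infinity>"
  obtains a where "A i j = ereal a" "a \<in> \<int>"
  using A_int assms by fastforce

lemma B_finite_int:
  assumes "i < m" "j < n" "B i j \<noteq> -\<infinity>"
  obtains b where "B i j = ereal b" "b \<in> \<int>"
  using B_int assms by fastforce

lemma tmult_max_attained:
  assumes "i < m"
  obtains h where "h < n" "B i h \<noteq> -\<infinity>" "tmult n B (\<lambda>h. ereal (x h)) i = B i h + ereal (x h)"
    "\<And>h'. h' < n \<Longrightarrow> B i h' + ereal (x h') \<le> tmult n B (\<lambda>h. ereal (x h)) i"
proof -
  let ?f = "\<lambda>h. B i h + ereal (x h)"
  have set: "{B i h + ereal (x h) | h. h < n} = ?f ` {..<n}" by auto
  have ne: "?f ` {..<n} \<noteq> {}" using n_pos by auto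
  obtain h where h: "h < n" "tmult n B (\<lambda>h. ereal (x h)) i = ?f h"
    using Max_in[OF _ ne] unfolding tmult_def set by auto
  have ge: "?f h' \<le> tmult n B (\<lambda>h. ereal (x h)) i" if "h' < n" for h'
    unfolding tmult_def set using that by simp
  obtain h1 where "h1 < n" "B i h1 \<noteq> -\<infinity>" using B_row assms by auto
  then have "?f h \<noteq> -\<infinity>" using ge[of h1] h by (cases "B i h1") auto
  then have "B i h \<noteq> -\<infinity>" by auto
  with h ge show ?thesis using that by blast
qed

lemma tmult_real:
  assumes "i < m"
  obtains c where "tmult n B (\<lambda>h. ereal (x h)) i = ereal c"
proof -
  obtain h where "h < n" "B i h \<noteq> -\<infinity>" "tmult n B (\<lambda>h. ereal (x h)) i = B i h + ereal (x h)"
    using tmult_max_attained assms by blast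
  with B_finite_int[OF assms] that show ?thesis by (metis plus_ereal.simps(1))
qed

lemma tres_min_attained:
  assumes "j < n" "\<And>i. i < m \<Longrightarrow> \<exists>c. z i = ereal c"
  obtains i where "i < m" "A i j \<noteq> -\<infinity>" "tres m A z j = - A i j + z i"
    "\<And>i'. i' < m \<Longrightarrow> tres m A z j \<le> - A i' j + z i'"
proof -
  let ?f = "\<lambda>i. - A i j + z i"
  have set: "{- A i j + z i | i. i < m} = ?f ` {..<m}" by auto
  have ne: "?f ` {..<m} \<noteq> {}" using m_pos by auto
  obtain i where i: "i < m" "tres m A z j = ?f i"
    using Min_in[OF _ ne] unfolding tres_def set by auto
  have le: "tres m A z j \<le> ?f i'" if "i' < m" for i'
    unfolding tres_def set using that by simp
  obtain i1 where i1: "i1 < m" "A i1 j \<noteq> -\<infinity>" using A_col assms by auto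
  then obtain a where "A i1 j = ereal a" using A_finite_int assms by blast
  moreover obtain c where "z i1 = ereal c" using assms(2) i1 by blast
  moreover obtain c' where "z i = ereal c'" using assms(2) i by blast
  ultimately have "?f i \<noteq> \<infinity>" using le[OF i1(1)] i by auto
  then have "A i j \<noteq> -\<infinity>" by auto
  with i le show ?thesis using that by blast
qed

text \<open>Take the row i optimal for the minimiser against x and, in that row, the column k
  optimal for the maximiser against y; then the same integer weight B i k - A i j bounds F(x)
  from below and F(y) from above.\<close>
lemma shapley_exchange:
  assumes "j < n"
  obtains k c where "k < n" "c \<in> \<int>" "\<bar>c\<bar> \<le> Wconst m n A B"
    "ereal (c + x k) \<le> shapley m n A B (\<lambda>h. ereal (x h)) j"
    "shapley m n A B (\<lambda>h. ereal (y h)) j \<le> ereal (c + y k)"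
proof -
  let ?tx = "tmult n B (\<lambda>h. ereal (x h))" and ?ty = "tmult n B (\<lambda>h. ereal (y h))"
  obtain i where i: "i < m" "A i j \<noteq> -\<infinity>" "shapley m n A B (\<lambda>h. ereal (x h)) j = - A i j + ?tx i"
    using tres_min_attained[OF assms, of ?tx] tmult_real unfolding shapley_def by metis
  have Fy: "shapley m n A B (\<lambda>h. ereal (y h)) j \<le> - A i j + ?ty i"
    using tres_min_attained[OF assms, of ?ty] tmult_real i(1) unfolding shapley_def by metis
  obtain k where k: "k < n" "B i k \<noteq> -\<infinity>" "?ty i = B i k + ereal (y k)"
    using tmult_max_attained[OF i(1)] by blast
  have tx: "B i k + ereal (x k) \<le> ?tx i"
    using tmult_max_attained[OF i(1)] k(1) by blast
  obtain a where a: "A i j = ereal a" "a \<in> \<int>" using A_finite_int i assms by blast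
  obtain b where b: "B i k = ereal b" "b \<in> \<int>" using B_finite_int i k by blast
  obtain t where t: "?tx i = ereal t" using tmult_real i(1) by blast
  show ?thesis
  proof (rule that[of k "b - a"])
    show "b - a \<in> \<int>" using a b by simp
    show "\<bar>b - a\<bar> \<le> Wconst m n A B"
      using Wconst_ge[of i m j n k A B] i assms k a b by (simp add: abs_minus_commute)
    show "ereal (b - a + x k) \<le> shapley m n A B (\<lambda>h. ereal (x h)) j"
      using i(3) tx a b t by simp
    show "shapley m n A B (\<lambda>h. ereal (y h)) j \<le> ereal (b - a + y k)"
      using Fy k(3) a b by (simp add: algebra_simps)
  qed (rule k(1))
qed

lemma shapley_real:
  assumes "j < n"
  obtains c where "shapley m n A B (\<lambda>h. ereal (x h)) j = ereal c"
proof -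
  obtain k c where "ereal (c + x k) \<le> shapley m n A B (\<lambda>h. ereal (x h)) j"
    "shapley m n A B (\<lambda>h. ereal (x h)) j \<le> ereal (c + x k)"
    using shapley_exchange[OF assms, of x x] by metis
  then show ?thesis using that by (metis antisym)
qed

lemma viter_real:
  "\<forall>j<n. viter m n A B l j = ereal (real_of_ereal (viter m n A B l j))"
proof (induction l)
  case (Suc l)
  have "viter m n A B (Suc l) = shapley m n A B (viter m n A B l)" by (simp add: viter_def)
  also have "\<dots> = shapley m n A B (\<lambda>h. ereal (real_of_ereal (viter m n A B l h)))"
    by (rule shapley_cong) (use Suc.IH in blast)
  finally have step: "viter m n A B (Suc l) = shapley m n A B (\<lambda>h. ereal (real_of_ereal (viter m n A B l h)))" .
  show ?case
  proof (intro allI impI)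
    fix j assume "j < n"
    then obtain c where "shapley m n A B (\<lambda>h. ereal (real_of_ereal (viter m n A B l h))) j = ereal c"
      by (rule shapley_real)
    with step show "viter m n A B (Suc l) j = ereal (real_of_ereal (viter m n A B (Suc l) j))" by simp
  qed
qed (simp add: viter_def)

lemma viter_leaves_orthant:
  assumes eig: "\<forall>j<n. shapley m n A B (\<lambda>h. ereal (v h)) j = ereal (r + v j)" and "r \<noteq> 0"
  shows "\<exists>L. real L \<le> 2 * real n ^ 2 * Wconst m n A B \<and>
    ((\<forall>j<n. 0 < viter m n A B L j) \<or> (\<forall>j<n. viter m n A B L j < 0))"
proof -
  define u where "u l j = real_of_ereal (viter m n A B l j)" for l j
  have u: "viter m n A B l j = ereal (u l j)" if "j < n" for l j
    using viter_real that unfolding u_def by blast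
  have u0: "\<forall>j<n. u 0 j = 0" unfolding u_def viter_def by simp
  have u_Suc: "ereal (u (Suc l) j) = shapley m n A B (\<lambda>h. ereal (u l h)) j" if "j < n" for l j
  proof -
    have "ereal (u (Suc l) j) = shapley m n A B (viter m n A B l) j"
      using u[OF that, of "Suc l"] by (simp add: viter_def)
    also have "\<dots> = shapley m n A B (\<lambda>h. ereal (u l h)) j"
      using shapley_cong[of n "viter m n A B l" "\<lambda>h. ereal (u l h)"] u by simp
    finally show ?thesis .
  qed
  consider "0 < r" | "r < 0" using assms(2) by linarith
  then show ?thesis
  proof cases
    case 1
    have "\<exists>k<n. \<exists>c\<in>\<int>. \<bar>c\<bar> \<le> Wconst m n A B \<and> r + v j - v k \<le> c \<and> c + u l k \<le> u (Suc l) j"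
      if j: "j < n" for l j
    proof -
      obtain k c where "k < n" "c \<in> \<int>" "\<bar>c\<bar> \<le> Wconst m n A B"
        "ereal (c + u l k) \<le> ereal (u (Suc l) j)" "ereal (r + v j) \<le> ereal (c + v k)"
        using shapley_exchange[OF j, of "u l" v] eig u_Suc[OF j] j by metis
      then show ?thesis by force
    qed
    from drift_forces_positive[OF n_pos 1 u0 this] show ?thesis using u by auto
  next
    case 2
    txt \<open>Exchanging the roles of u^l and v gives the mirrored estimate for -u, -v and -r.\<close>
    have "\<exists>k<n. \<exists>c\<in>\<int>. \<bar>c\<bar> \<le> Wconst m n A B \<and> - r + - v j - - v k \<le> c \<and> c + - u l k \<le> - u (Suc l) j"
      if j: "j < n" for l j
    proof -
      obtain k c where "k < n" "c \<in> \<int>" "\<bar>c\<bar> \<le> Wconst m n A B"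
        "ereal (c + v k) \<le> ereal (r + v j)" "ereal (u (Suc l) j) \<le> ereal (c + u l k)"
        using shapley_exchange[OF j, of v "u l"] eig u_Suc[OF j] j by metis
      then show ?thesis by (intro exI[of _ k] conjI bexI[of _ "- c"]) auto
    qed
    from drift_forces_positive[of n "- r" "\<lambda>l j. - u l j", OF n_pos _ _ this] 2 u0
    show ?thesis using u by auto
  qed
qed

end

theorem mainTheorem13:
  fixes m n :: nat and A B :: "nat \<Rightarrow> nat \<Rightarrow> ereal"
  assumes "0 < m" and "0 < n"
    and A_int: "\<forall>i<m. \<forall>j<n. A i j = -\<infinity> \<or> (\<exists>k::int. A i j = ereal (of_int k))"
    and B_int: "\<forall>i<m. \<forall>j<n. B i j = -\<infinity> \<or> (\<exists>k::int. B i j = ereal (of_int k))"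
    and A_col: "\<forall>j<n. \<exists>i<m. A i j \<noteq> -\<infinity>"
    and B_row: "\<forall>i<m. \<exists>j<n. B i j \<noteq> -\<infinity>"
    and eig: "\<exists>(v :: nat \<Rightarrow> real) (r :: real).
               (\<forall>j<n. shapley m n A B (\<lambda>h. ereal (v h)) j = ereal (r + v j)) \<and> r \<noteq> 0"
  shows "\<exists>N. \<not> continues n (viter m n A B N) \<and> (\<forall>l<N. continues n (viter m n A B l))
             \<and> real N \<le> 2 * real n ^ 2 * Wconst m n A B"
proof -
  interpret integer_shapley m n A B using assms by unfold_locales
  obtain v r where "\<forall>j<n. shapley m n A B (\<lambda>h. ereal (v h)) j = ereal (r + v j)" "r \<noteq> 0"
    using eig by blast
  then obtain L where L: "real L \<le> 2 * real n ^ 2 * Wconst m n A B"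
    "(\<forall>j<n. 0 < viter m n A B L j) \<or> (\<forall>j<n. viter m n A B L j < 0)"
    using viter_leaves_orthant by blast
  have L_exit: "\<not> continues n (viter m n A B L)" using not_continues_if_one_sign[OF n_pos L(2)] .
  define N where "N = (LEAST l. \<not> continues n (viter m n A B l))"
  have "\<not> continues n (viter m n A B N)" unfolding N_def by (rule LeastI[of _ L]) (rule L_exit)
  moreover have "\<forall>l<N. continues n (viter m n A B l)" unfolding N_def using not_less_Least by blast
  moreover have "N \<le> L" unfolding N_def by (rule Least_le) (rule L_exit)
  ultimately show ?thesis using L(1) by (intro exI[of _ N]) auto
qed

end
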